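(* Let $f:\{0,1\}^N\to\{0,1\}$ be a partial function. Then \[\mathrm{D}(f)\leq 2\mathrm{R}_0(f)\mathrm{Bal}(f).\]
   Context: $\mathrm{D}(f)$ is deterministic and $\mathrm{R}_0(f)$ zero-error randomized query complexity. $\mathrm{Bal}(f)$ is $0$ if $f$ is constant, and otherwise $\min\{1+\log|f^{-1}(0)|,\,1+\log|f^{-1}(1)|\}$ (log base 2). *)

theory Defs
  imports "HOL-Probability.Probability"
begin

text \<open>Inputs are bit strings of length N (bool lists). A partial Boolean function is
  f :: bool list => bool option; its domain is the set of length-N strings where it is defined.\<close>

definition dom_pf :: "nat \<Rightarrow> (bool list \<Rightarrow> bool option) \<Rightarrow> bool list set" where
  "dom_pf N f = {x. length x = N \<and> f x \<noteq> None}"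

definition preim :: "nat \<Rightarrow> (bool list \<Rightarrow> bool option) \<Rightarrow> bool \<Rightarrow> bool list set" where
  "preim N f b = {x. length x = N \<and> f x = Some b}"

datatype dtree = Leaf bool | Node nat dtree dtree

fun depth :: "dtree \<Rightarrow> nat" where
  "depth (Leaf b) = 0"
| "depth (Node i t0 t1) = Suc (max (depth t0) (depth t1))"

fun eval_dt :: "dtree \<Rightarrow> bool list \<Rightarrow> bool" where
  "eval_dt (Leaf b) x = b"
| "eval_dt (Node i t0 t1) x = (if x ! i then eval_dt t1 x else eval_dt t0 x)"

fun cost_dt :: "dtree \<Rightarrow> bool list \<Rightarrow> nat" where
  "cost_dt (Leaf b) x = 0"
| "cost_dt (Node i t0 t1) x = Suc (if x ! i then cost_dt t1 x else cost_dt t0 x)"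

fun valid_dt :: "nat \<Rightarrow> dtree \<Rightarrow> bool" where
  "valid_dt N (Leaf b) = True"
| "valid_dt N (Node i t0 t1) = (i < N \<and> valid_dt N t0 \<and> valid_dt N t1)"

definition computes :: "nat \<Rightarrow> (bool list \<Rightarrow> bool option) \<Rightarrow> dtree \<Rightarrow> bool" where
  "computes N f T \<longleftrightarrow> valid_dt N T \<and> (\<forall>x\<in>dom_pf N f. f x = Some (eval_dt T x))"

definition D_cc :: "nat \<Rightarrow> (bool list \<Rightarrow> bool option) \<Rightarrow> nat" where
  "D_cc N f = (LEAST d. \<exists>T. computes N f T \<and> depth T = d)"

definition rdt_cost :: "nat \<Rightarrow> (bool list \<Rightarrow> bool option) \<Rightarrow> dtree pmf \<Rightarrow> real" where
  "rdt_cost N f P = Max (insert 0 ((\<lambda>x. measure_pmf.expectation P (\<lambda>T. real (cost_dt T x))) ` dom_pf N f))"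

definition R0_cc :: "nat \<Rightarrow> (bool list \<Rightarrow> bool option) \<Rightarrow> real" where
  "R0_cc N f = Inf {rdt_cost N f P | P. finite (set_pmf P) \<and> (\<forall>T\<in>set_pmf P. computes N f T)}"

definition constant_pf :: "nat \<Rightarrow> (bool list \<Rightarrow> bool option) \<Rightarrow> bool" where
  "constant_pf N f \<longleftrightarrow> (\<exists>b. \<forall>x\<in>dom_pf N f. f x = Some b)"

definition Bal :: "nat \<Rightarrow> (bool list \<Rightarrow> bool option) \<Rightarrow> real" where
  "Bal N f = (if constant_pf N f then 0
     else min (1 + log 2 (real (card (preim N f False)))) (1 + log 2 (real (card (preim N f True)))))"

end

theory Submission
  imports Defs
begin

text \<open>
  Fix a zero-error randomized tree of cost c and let k = \<lfloor>2c\<rfloor>, so that 2c < k + 1.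
  By Markov's inequality and averaging, for every set S of inputs some tree in the support
  finishes within k queries on at least half of S.  Starting from S = f\<inverse>(b), run such a tree
  for k queries; inputs on which it finishes are answered correctly, and on the rest it is
  restarted with the set of unfinished b-inputs, which has at most half the size.  After
  1 + log |f\<inverse>(b)| rounds no b-input is left and the answer \<not>b is correct, giving a
  deterministic tree of depth at most 2c (1 + log |f\<inverse>(b)|) for either choice of b.
\<close>

fun graft :: "nat \<Rightarrow> dtree \<Rightarrow> dtree \<Rightarrow> dtree" where
  "graft k (Leaf b) C = Leaf b"
| "graft 0 (Node i t0 t1) C = C"
| "graft (Suc k) (Node i t0 t1) C = Node i (graft k t0 C) (graft k t1 C)"

lemma valid_dt_graft: "valid_dt N T \<Longrightarrow> valid_dt N C \<Longrightarrow> valid_dt N (graft k T C)"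
  by (induction k T C rule: graft.induct) auto

lemma eval_dt_graft:
  "eval_dt (graft k T C) x = (if cost_dt T x \<le> k then eval_dt T x else eval_dt C x)"
  by (induction k T C rule: graft.induct) auto

lemma depth_graft_le: "depth (graft k T C) \<le> k + depth C"
  by (induction k T C rule: graft.induct) auto

fun full_tree :: "nat \<Rightarrow> (bool list \<Rightarrow> bool) \<Rightarrow> dtree" where
  "full_tree 0 g = Leaf (g [])"
| "full_tree (Suc n) g =
     Node n (full_tree n (\<lambda>xs. g (xs @ [False]))) (full_tree n (\<lambda>xs. g (xs @ [True])))"

lemma eval_dt_full_tree: "n \<le> length x \<Longrightarrow> eval_dt (full_tree n g) x = g (take n x)"
proof (induction n arbitrary: g)
  case (Suc n)
  then have "take (Suc n) x = take n x @ [x ! n]"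
    by (simp add: take_Suc_conv_app_nth)
  with Suc show ?case by auto
qed simp

lemma valid_dt_full_tree: "n \<le> N \<Longrightarrow> valid_dt N (full_tree n g)"
  by (induction n arbitrary: g) auto

lemma computes_full_tree: "computes N f (full_tree N (\<lambda>x. the (f x)))"
  using valid_dt_full_tree[of N N] eval_dt_full_tree[of N]
  by (auto simp: computes_def dom_pf_def)

lemma finite_dom_pf: "finite (dom_pf N f)"
proof -
  have "finite {xs. set xs \<subseteq> (UNIV :: bool set) \<and> length xs = N}"
    by (rule finite_lists_length_eq) simp
  then show ?thesis
    unfolding dom_pf_def by (rule rev_finite_subset) auto
qed

lemma preim_subset_dom_pf: "preim N f b \<subseteq> dom_pf N f"
  by (auto simp: preim_def dom_pf_def)

lemma finite_preim: "finite (preim N f b)"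
  using finite_dom_pf preim_subset_dom_pf by (rule rev_finite_subset)

lemma dom_pf_eq_preim_Un: "dom_pf N f = preim N f (\<not> b) \<union> preim N f b"
  by (auto simp: dom_pf_def preim_def)

lemma preim_nonempty_if_not_constant:
  assumes "\<not> constant_pf N f" shows "preim N f b \<noteq> {}"
proof
  assume "preim N f b = {}"
  then have "\<forall>x\<in>dom_pf N f. f x = Some (\<not> b)"
    by (auto simp: dom_pf_def preim_def)
  with assms show False
    unfolding constant_pf_def by blast
qed

lemma D_cc_le_depth: "computes N f T \<Longrightarrow> D_cc N f \<le> depth T"
  unfolding D_cc_def by (rule Least_le) blast

lemma D_cc_constant: "constant_pf N f \<Longrightarrow> D_cc N f = 0"
  using D_cc_le_depth[of N f "Leaf _"]
  by (fastforce simp: constant_pf_def computes_def)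

lemma expectation_cost_le_rdt_cost:
  assumes "x \<in> dom_pf N f"
  shows "measure_pmf.expectation P (\<lambda>T. real (cost_dt T x)) \<le> rdt_cost N f P"
  unfolding rdt_cost_def using assms finite_dom_pf by (intro Max_ge) auto

lemma rdt_cost_nonneg: "0 \<le> rdt_cost N f P"
  unfolding rdt_cost_def using finite_dom_pf by (intro Max_ge) auto

lemma R0_cc_greatest:
  assumes "\<And>P. finite (set_pmf P) \<Longrightarrow> \<forall>T\<in>set_pmf P. computes N f T \<Longrightarrow> a \<le> rdt_cost N f P"
  shows "a \<le> R0_cc N f"
  unfolding R0_cc_def
proof (rule cInf_greatest)
  let ?T = "full_tree N (\<lambda>x. the (f x))"
  have "rdt_cost N f (return_pmf ?T) \<in>
      {rdt_cost N f P | P. finite (set_pmf P) \<and> (\<forall>T\<in>set_pmf P. computes N f T)}"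
    using computes_full_tree[of N f] by (intro CollectI exI[of _ "return_pmf ?T"]) simp
  then show "{rdt_cost N f P | P. finite (set_pmf P) \<and> (\<forall>T\<in>set_pmf P. computes N f T)} \<noteq> {}"
    by blast
qed (use assms in blast)

lemma exists_sample_half_cheap:
  fixes P :: "'a pmf" and g :: "'a \<Rightarrow> 'b \<Rightarrow> nat"
  assumes fin: "finite (set_pmf P)" "finite S"
    and exp_le: "\<And>x. x \<in> S \<Longrightarrow> measure_pmf.expectation P (\<lambda>T. real (g T x)) \<le> c"
    and k: "2 * c < real k + 1"
  shows "\<exists>T\<in>set_pmf P. 2 * card {x\<in>S. k < g T x} \<le> card S"
proof (rule ccontr)
  let ?A = "set_pmf P"
  let ?bad = "\<lambda>T. card {x\<in>S. k < g T x}"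
  assume "\<not> ?thesis"
  then have many_bad: "real (card S + 1) / 2 \<le> ?bad T" if "T \<in> ?A" for T
    using that by force
  have markov: "real (k + 1) * ?bad T \<le> (\<Sum>x\<in>S. real (g T x))" for T
  proof -
    have "(k + 1) * ?bad T = (\<Sum>x\<in>{x\<in>S. k < g T x}. k + 1)" by simp
    also have "\<dots> \<le> (\<Sum>x\<in>{x\<in>S. k < g T x}. g T x)" by (rule sum_mono) auto
    also have "\<dots> \<le> (\<Sum>x\<in>S. g T x)" by (rule sum_mono2) (use fin in auto)
    finally show ?thesis by (metis of_nat_le_iff of_nat_mult of_nat_sum)
  qed
  have "real (k + 1) * (real (card S + 1) / 2)
      = (\<Sum>T\<in>?A. pmf P T * (real (k + 1) * (real (card S + 1) / 2)))"
    by (simp only: sum_distrib_right[symmetric] sum_pmf_eq_1[OF fin(1) order.refl])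
  also have "\<dots> \<le> (\<Sum>T\<in>?A. pmf P T * (\<Sum>x\<in>S. real (g T x)))"
  proof (intro sum_mono mult_left_mono)
    fix T assume "T \<in> ?A"
    then have "real (k + 1) * (real (card S + 1) / 2) \<le> real (k + 1) * ?bad T"
      by (intro mult_left_mono many_bad) auto
    also note markov
    finally show "real (k + 1) * (real (card S + 1) / 2) \<le> (\<Sum>x\<in>S. real (g T x))" .
  qed simp
  also have "\<dots> = (\<Sum>x\<in>S. measure_pmf.expectation P (\<lambda>T. real (g T x)))"
    using fin(1) by (simp add: integral_measure_pmf_real[of ?A] sum.swap[of _ S]
        sum_distrib_left mult.commute)
  also have "\<dots> \<le> card S * c"
    using sum_mono[of S _ "\<lambda>_. c"] exp_le by simp
  also have "\<dots> \<le> card S * ((real k + 1) / 2)"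
    using k by (intro mult_left_mono) auto
  finally have "real (k + 1) * (real (card S + 1) / 2) \<le> real (card S) * ((real k + 1) / 2)" .
  then show False by (simp add: algebra_simps)
qed

lemma exists_tree_correct_on_set:
  assumes halve: "\<And>S. finite S \<Longrightarrow> S \<subseteq> preim N f b \<Longrightarrow> S \<noteq> {} \<Longrightarrow>
      \<exists>T. computes N f T \<and> 2 * card {x\<in>S. k < cost_dt T x} \<le> card S"
  shows "finite S \<Longrightarrow> S \<subseteq> preim N f b \<Longrightarrow> S \<noteq> {} \<Longrightarrow>
    \<exists>C. valid_dt N C \<and> real (depth C) \<le> real k * (1 + log 2 (card S)) \<and>
      (\<forall>x\<in>preim N f (\<not> b) \<union> S. f x = Some (eval_dt C x))"
proof (induction "card S" arbitrary: S rule: less_induct)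
  case less
  obtain T where T: "computes N f T" and half: "2 * card {x\<in>S. k < cost_dt T x} \<le> card S"
    using halve less.prems by blast
  define S' where "S' = {x\<in>S. k < cost_dt T x}"
  have cS: "card S > 0" using less.prems by auto
  obtain C where C: "valid_dt N C" "real (depth C) \<le> real k * log 2 (card S)"
    and C_correct: "\<forall>x\<in>preim N f (\<not> b) \<union> S'. f x = Some (eval_dt C x)"
  proof (cases "S' = {}")
    case True
    have "\<forall>x\<in>preim N f (\<not> b). f x = Some (\<not> b)" by (simp add: preim_def)
    with True cS that[of "Leaf (\<not> b)"] show ?thesis by simp
  next
    case False
    have "card S' < card S" "finite S'" "S' \<subseteq> preim N f b"
      using half cS less.prems unfolding S'_def by auto
    with False obtain C where C: "valid_dt N C" "real (depth C) \<le> real k * (1 + log 2 (card S'))"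
      "\<forall>x\<in>preim N f (\<not> b) \<union> S'. f x = Some (eval_dt C x)"
      using less.hyps by blast
    have "card S' > 0" using False \<open>finite S'\<close> by auto
    moreover have "2 * real (card S') \<le> real (card S)"
      using half unfolding S'_def by linarith
    ultimately have "1 + log 2 (card S') \<le> log 2 (card S)"
      using log_le_cancel_iff[of 2 "2 * card S'" "card S"] by (simp add: log_mult)
    then have "real k * (1 + log 2 (card S')) \<le> real k * log 2 (card S)"
      by (intro mult_left_mono) auto
    with C that show ?thesis by simp
  qed
  have "valid_dt N (graft k T C)"
    using T C(1) by (auto simp: computes_def intro: valid_dt_graft)
  moreover have "real (depth (graft k T C)) \<le> real k * (1 + log 2 (card S))"
    using depth_graft_le[of k T C] C(2) by (simp add: algebra_simps)
  moreover have "f x = Some (eval_dt (graft k T C) x)" if x: "x \<in> preim N f (\<not> b) \<union> S" for x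
  proof (cases "cost_dt T x \<le> k")
    case True
    from x less.prems(2) have "x \<in> dom_pf N f"
      by (auto simp: dom_pf_eq_preim_Un[of N f b])
    with True T show ?thesis
      by (simp add: eval_dt_graft computes_def)
  next
    case False
    with x C_correct show ?thesis by (auto simp: eval_dt_graft S'_def)
  qed
  ultimately show ?case by blast
qed

lemma D_cc_le_rdt_cost:
  fixes P :: "dtree pmf"
  assumes fin: "finite (set_pmf P)"
    and comp: "\<forall>T\<in>set_pmf P. computes N f T"
    and ne: "preim N f b \<noteq> {}"
  shows "real (D_cc N f) \<le> 2 * rdt_cost N f P * (1 + log 2 (card (preim N f b)))"
proof -
  define c where "c = rdt_cost N f P"
  define k where "k = nat \<lfloor>2 * c\<rfloor>"
  have "0 \<le> c" unfolding c_def by (rule rdt_cost_nonneg)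
  then have k: "2 * c < real k + 1" "real k \<le> 2 * c"
    unfolding k_def by linarith+
  have halve: "\<exists>T. computes N f T \<and> 2 * card {x\<in>S. k < cost_dt T x} \<le> card S"
    if S: "finite S" "S \<subseteq> preim N f b" for S
  proof -
    have exp_le: "measure_pmf.expectation P (\<lambda>T. real (cost_dt T x)) \<le> c" if "x \<in> S" for x
      using that S(2) preim_subset_dom_pf unfolding c_def
      by (intro expectation_cost_le_rdt_cost) blast
    from exists_sample_half_cheap[where g = cost_dt, OF fin S(1) exp_le k(1)] comp show ?thesis
      by blast
  qed
  obtain C where C: "valid_dt N C"
      "real (depth C) \<le> real k * (1 + log 2 (card (preim N f b)))"
      "\<forall>x\<in>preim N f (\<not> b) \<union> preim N f b. f x = Some (eval_dt C x)"
    using exists_tree_correct_on_set[OF halve finite_preim order.refl ne] by blast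
  then have "computes N f C"
    by (simp add: computes_def dom_pf_eq_preim_Un[of N f b])
  then have "real (D_cc N f) \<le> real (depth C)"
    using D_cc_le_depth by simp
  also have "\<dots> \<le> real k * (1 + log 2 (card (preim N f b)))"
    by (fact C(2))
  also have "\<dots> \<le> 2 * c * (1 + log 2 (card (preim N f b)))"
  proof (rule mult_right_mono[OF k(2)])
    show "0 \<le> 1 + log 2 (card (preim N f b))"
      using ne finite_preim by (simp add: card_gt_0_iff Suc_le_eq)
  qed
  finally show ?thesis unfolding c_def .
qed

theorem theorem24:
  fixes N :: nat and f :: "bool list \<Rightarrow> bool option"
  shows "real (D_cc N f) \<le> 2 * R0_cc N f * Bal N f"
proof (cases "constant_pf N f")
  case True
  then show ?thesis by (simp add: D_cc_constant Bal_def)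
next
  case False
  have ne: "preim N f b \<noteq> {}" for b
    using False by (rule preim_nonempty_if_not_constant)
  have "log 2 (card (preim N f b)) \<ge> 0" for b
    using ne finite_preim by (simp add: card_gt_0_iff Suc_le_eq)
  then have Bal_ge_1: "Bal N f \<ge> 1"
    using False by (simp add: Bal_def)
  have "real (D_cc N f) / (2 * Bal N f) \<le> R0_cc N f"
  proof (rule R0_cc_greatest)
    fix P :: "dtree pmf"
    assume "finite (set_pmf P)" "\<forall>T\<in>set_pmf P. computes N f T"
    from D_cc_le_rdt_cost[OF this ne] have "real (D_cc N f) \<le> 2 * rdt_cost N f P * Bal N f"
      using False by (simp add: Bal_def min_def)
    with Bal_ge_1 show "real (D_cc N f) / (2 * Bal N f) \<le> rdt_cost N f P"
      by (simp add: field_simps)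
  qed
  with Bal_ge_1 show ?thesis by (simp add: field_simps)
qed

end
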